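(* Let $(A,E,\varepsilon,\tau)$ be an analytical $B$-$B$-non-commutative probability space, let $(C_\ell,C_r)$ be a pair of $B$-algebras in $A$, let $X\in A_\ell$, and let $\eta:B\to B$ be completely positive. Fix $b_1,b_2\in B$ and define $\eta_{\ell,b_1,b_2}:B\to B$ by $\eta_{\ell,b_1,b_2}(b)=\eta(bb_2)b_1$. If $\xi=J_\ell(X:(C_\ell,C_r),\eta)$ exists and $\eta_{\ell,b_1,b_2}$ is completely positive, then $J_\ell(X:(C_\ell,C_r),\eta_{\ell,b_1,b_2})$ exists and equals $R_{b_1}L_{b_2}\xi$. Similarly, if $Y\in A_r$, $\eta_{r,b_1,b_2}(b)=b_2\eta(b_1b)$ is completely positive and $J_r(Y:(C_\ell,C_r),\eta)$ exists, then $J_r(Y:(C_\ell,C_r),\eta_{r,b_1,b_2})$ exists and equals $R_{b_1}L_{b_2}J_r(Y:(C_\ell,C_r),\eta)$.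
   Context: Let $B$ be a unital $*$-algebra. A $B$-$B$-non-commutative probability space is a triple $(A,E,\varepsilon)$: $A$ a unital $*$-algebra, $\varepsilon:B\otimes B^{\mathrm{op}}\to A$ a unital $*$-homomorphism injective on $B\otimes 1$ and on $1\otimes B^{\mathrm{op}}$, $E:A\to B$ unital linear with $E(\varepsilon(b_1\otimes b_2)a)=b_1E(a)b_2$, $E(a\varepsilon(b\otimes 1))=E(a\varepsilon(1\otimes b))$. Write $L_b=\varepsilon(b\otimes1)$, $R_b=\varepsilon(1\otimes b)$, $B_\ell=\{L_b\}$, $B_r=\{R_b\}$, $A_\ell$ = commutant of $B_r$, $A_r$ = commutant of $B_\ell$. It is analytical, $(A,E,\varepsilon,\tau)$, if $\tau$ is a state with $\tau(a)=\tau(L_{E(a)})=\tau(R_{E(a)})$, $\tau_B(b)=\tau(L_b)$ is tracial, left multiplication by elements of $A$ is bounded on $A/N_\tau$ and extends to bounded operators on $L_2(A,\tau)$, and $E$ is completely positive on $A_\ell$ and $A_r$; $\tau(a\xi):=\langle a\xi,1\rangle$ for $\xi\in L_2(A,\tau)$. A pair of $B$-algebras: unital subalgebras $B_\ell\subseteq C_\ell\subseteq A_\ell$, $B_r\subseteq C_r\subseteq A_r$. For $X\in A_\ell$ and completely positive $\eta$, $J_\ell(X:(C_\ell,C_r),\eta)$ is the unique $\xi$ in the $L_2$-closure of $\mathrm{alg}(X,C_\ell,C_r)$ with, for all $n\ge0$ and $Z_1,\dots,Z_n\in\{X\}\cup C_\ell\cup C_r$, $\tau(Z_1\cdots Z_n\xi)=\sum_{k:Z_k=X}\tau\big((\prod_{p\in\{1..n\}\setminus(V_k\cup\{k\})}Z_p)L_{\eta(E(\prod_{p\in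 V_k}Z_p))}\big)$, $V_k=\{m:k<m\le n, Z_m\in\{X\}\cup C_\ell\}$ (products in increasing order, empty product $1$). For $Y\in A_r$, $J_r(Y:(C_\ell,C_r),\eta)$ is the unique $\nu$ in the closure of $\mathrm{alg}(Y,C_\ell,C_r)$ with $\tau(Z_1\cdots Z_n\nu)=\sum_{k:Z_k=Y}\tau\big((\prod_{p\notin V_k\cup\{k\}}Z_p)R_{\eta(E(\prod_{p\in V_k}Z_p))}\big)$ for $Z_i\in\{Y\}\cup C_\ell\cup C_r$, $V_k=\{m:k<m\le n,Z_m\in\{Y\}\cup C_r\}$. *)

theory Defs
  imports Complex_Main
begin

class star_cmplx_alg = ring_1 +
  fixes cscale :: "complex \<Rightarrow> 'a \<Rightarrow> 'a"
    and adj :: "'a \<Rightarrow> 'a"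
  assumes cscale_add_right: "cscale c (x + y) = cscale c x + cscale c y"
    and cscale_add_left: "cscale (c + d) x = cscale c x + cscale d x"
    and cscale_cscale: "cscale c (cscale d x) = cscale (c * d) x"
    and cscale_one: "cscale 1 x = x"
    and cscale_mult_left: "cscale c x * y = cscale c (x * y)"
    and cscale_mult_right: "x * cscale c y = cscale c (x * y)"
    and adj_add: "adj (x + y) = adj x + adj y"
    and adj_cscale: "adj (cscale c x) = cscale (cnj c) (adj x)"
    and adj_mult: "adj (x * y) = adj y * adj x"
    and adj_adj: "adj (adj x) = x"

definition clinear :: "('a::star_cmplx_alg \<Rightarrow> 'b::star_cmplx_alg) \<Rightarrow> bool" where
  "clinear f \<longleftrightarrow> (\<forall>x y. f (x + y) = f x + f y) \<and> (\<forall>c x. f (cscale c x) = cscale c (f x))"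

definition clinear_functional :: "('a::star_cmplx_alg \<Rightarrow> complex) \<Rightarrow> bool" where
  "clinear_functional f \<longleftrightarrow> (\<forall>x y. f (x + y) = f x + f y) \<and> (\<forall>c x. f (cscale c x) = c * f x)"

definition star_hom :: "('b::star_cmplx_alg \<Rightarrow> 'a::star_cmplx_alg) \<Rightarrow> bool" where
  "star_hom f \<longleftrightarrow> clinear f \<and> f 1 = 1 \<and> (\<forall>x y. f (x * y) = f x * f y) \<and> (\<forall>x. f (adj x) = adj (f x))"

definition star_antihom :: "('b::star_cmplx_alg \<Rightarrow> 'a::star_cmplx_alg) \<Rightarrow> bool" where
  "star_antihom f \<longleftrightarrow> clinear f \<and> f 1 = 1 \<and> (\<forall>x y. f (x * y) = f y * f x) \<and> (\<forall>x. f (adj x) = adj (f x))"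

text \<open>An n x n matrix over a set S is positive if it is a finite sum of matrices Y^* Y with
  Y \<in> M_n(S). Matrices are functions nat \<Rightarrow> nat \<Rightarrow> 'a, only entries i,j < n matter.\<close>
definition psd_mat :: "nat \<Rightarrow> 'a::star_cmplx_alg set \<Rightarrow> (nat \<Rightarrow> nat \<Rightarrow> 'a) \<Rightarrow> bool" where
  "psd_mat n S M \<longleftrightarrow>
     (\<exists>Ys. (\<forall>Y\<in>set Ys. \<forall>i<n. \<forall>j<n. Y i j \<in> S) \<and>
          (\<forall>i<n. \<forall>j<n. M i j = sum_list (map (\<lambda>Y. \<Sum>k<n. adj (Y k i) * Y k j) Ys)))"

definition cp_on :: "'a::star_cmplx_alg set \<Rightarrow> ('a \<Rightarrow> 'b::star_cmplx_alg) \<Rightarrow> bool" where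
  "cp_on S \<phi> \<longleftrightarrow> clinear \<phi> \<and>
     (\<forall>n M. psd_mat n S M \<longrightarrow> psd_mat n UNIV (\<lambda>i j. \<phi> (M i j)))"

text \<open>The unital *-homomorphism \<epsilon> : B \<otimes> B^op \<rightarrow> A is given by its restrictions
  L b = \<epsilon>(b \<otimes> 1) and R b = \<epsilon>(1 \<otimes> b): L is a unital *-homomorphism, R a unital
  *-anti-homomorphism, both injective, with commuting ranges.\<close>
definition bb_ncps :: "('b::star_cmplx_alg \<Rightarrow> 'a::star_cmplx_alg) \<Rightarrow> ('b \<Rightarrow> 'a) \<Rightarrow> ('a \<Rightarrow> 'b) \<Rightarrow> bool" where
  "bb_ncps L R E \<longleftrightarrow>
     star_hom L \<and> star_antihom R \<and> inj L \<and> inj R \<and> (\<forall>b c. L b * R c = R c * L b) \<and>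
     clinear E \<and> E 1 = 1 \<and>
     (\<forall>b1 b2 a. E (L b1 * R b2 * a) = b1 * E a * b2) \<and>
     (\<forall>a b. E (a * L b) = E (a * R b))"

definition A_left :: "('b::star_cmplx_alg \<Rightarrow> 'a::star_cmplx_alg) \<Rightarrow> 'a set" where
  "A_left R = {a. \<forall>c. a * R c = R c * a}"

definition A_right :: "('b::star_cmplx_alg \<Rightarrow> 'a::star_cmplx_alg) \<Rightarrow> 'a set" where
  "A_right L = {a. \<forall>c. a * L c = L c * a}"

definition cstate :: "('a::star_cmplx_alg \<Rightarrow> complex) \<Rightarrow> bool" where
  "cstate \<tau> \<longleftrightarrow> clinear_functional \<tau> \<and> \<tau> 1 = 1 \<and>
     (\<forall>a. Im (\<tau> (adj a * a)) = 0 \<and> 0 \<le> Re (\<tau> (adj a * a)))"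

definition analytical :: "('b::star_cmplx_alg \<Rightarrow> 'a::star_cmplx_alg) \<Rightarrow> ('b \<Rightarrow> 'a) \<Rightarrow> ('a \<Rightarrow> 'b) \<Rightarrow> ('a \<Rightarrow> complex) \<Rightarrow> bool" where
  "analytical L R E \<tau> \<longleftrightarrow>
     bb_ncps L R E \<and> cstate \<tau> \<and>
     (\<forall>a. \<tau> a = \<tau> (L (E a)) \<and> \<tau> a = \<tau> (R (E a))) \<and>
     (\<forall>b c. \<tau> (L (b * c)) = \<tau> (L (c * b))) \<and>
     (\<forall>a. \<exists>C. \<forall>x. Re (\<tau> (adj (a * x) * (a * x))) \<le> C * Re (\<tau> (adj x * x))) \<and>
     cp_on (A_left R) E \<and> cp_on (A_right L) E"

definition unital_subalg :: "'a::star_cmplx_alg set \<Rightarrow> bool" where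
  "unital_subalg S \<longleftrightarrow> 1 \<in> S \<and> (\<forall>x\<in>S. \<forall>y\<in>S. x + y \<in> S \<and> x * y \<in> S) \<and>
     (\<forall>c. \<forall>x\<in>S. cscale c x \<in> S)"

definition B_pair :: "('b::star_cmplx_alg \<Rightarrow> 'a::star_cmplx_alg) \<Rightarrow> ('b \<Rightarrow> 'a) \<Rightarrow> 'a set \<Rightarrow> 'a set \<Rightarrow> bool" where
  "B_pair L R Cl Cr \<longleftrightarrow>
     unital_subalg Cl \<and> range L \<subseteq> Cl \<and> Cl \<subseteq> A_left R \<and>
     unital_subalg Cr \<and> range R \<subseteq> Cr \<and> Cr \<subseteq> A_right L"

inductive_set gen_alg :: "'a::star_cmplx_alg set \<Rightarrow> 'a set" for S where
  gen_base: "x \<in> S \<Longrightarrow> x \<in> gen_alg S"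
| gen_one: "1 \<in> gen_alg S"
| gen_add: "x \<in> gen_alg S \<Longrightarrow> y \<in> gen_alg S \<Longrightarrow> x + y \<in> gen_alg S"
| gen_mult: "x \<in> gen_alg S \<Longrightarrow> y \<in> gen_alg S \<Longrightarrow> x * y \<in> gen_alg S"
| gen_scale: "x \<in> gen_alg S \<Longrightarrow> cscale c x \<in> gen_alg S"

text \<open>Elements of L_2(A,\<tau>) are represented by sequences in A that are Cauchy for the
  seminorm a \<mapsto> \<tau>(a^*a)^{1/2}; an element lies in the L_2-closure of a subset S iff it
  has such a representing sequence in S.\<close>
definition l2_cauchy :: "('a::star_cmplx_alg \<Rightarrow> complex) \<Rightarrow> (nat \<Rightarrow> 'a) \<Rightarrow> bool" where
  "l2_cauchy \<tau> x \<longleftrightarrow> (\<forall>e>0. \<exists>N. \<forall>m\<ge>N. \<forall>k\<ge>N.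
      Re (\<tau> (adj (x m - x k) * (x m - x k))) < e)"

text \<open>\<tau>(a\<xi>) = \<langle>a\<xi>,1\<rangle> for \<xi> represented by the sequence x.\<close>
definition tau_L2 :: "('a::star_cmplx_alg \<Rightarrow> complex) \<Rightarrow> 'a \<Rightarrow> (nat \<Rightarrow> 'a) \<Rightarrow> complex" where
  "tau_L2 \<tau> a x = lim (\<lambda>k. \<tau> (a * x k))"

definition subprod :: "'a::monoid_mult list \<Rightarrow> (nat \<Rightarrow> bool) \<Rightarrow> 'a" where
  "subprod Zs P = prod_list (map (\<lambda>p. Zs ! p) (filter P [0..<length Zs]))"

text \<open>x represents J_l(X:(Cl,Cr),\<eta>) (indices are 0-based).\<close>
definition is_J_left ::
  "('b::star_cmplx_alg \<Rightarrow> 'a::star_cmplx_alg) \<Rightarrow> ('a \<Rightarrow> 'b) \<Rightarrow> ('a \<Rightarrow> complex) \<Rightarrow>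
   'a \<Rightarrow> 'a set \<Rightarrow> 'a set \<Rightarrow> ('b \<Rightarrow> 'b) \<Rightarrow> (nat \<Rightarrow> 'a) \<Rightarrow> bool" where
  "is_J_left L E \<tau> X Cl Cr \<eta> x \<longleftrightarrow>
     l2_cauchy \<tau> x \<and> (\<forall>k. x k \<in> gen_alg (insert X (Cl \<union> Cr))) \<and>
     (\<forall>Zs. set Zs \<subseteq> insert X (Cl \<union> Cr) \<longrightarrow>
        tau_L2 \<tau> (prod_list Zs) x =
          (\<Sum>k\<in>{k. k < length Zs \<and> Zs ! k = X}.
             (let V = {m. k < m \<and> m < length Zs \<and> Zs ! m \<in> insert X Cl} in
              \<tau> (subprod Zs (\<lambda>p. p \<notin> V \<and> p \<noteq> k) * L (\<eta> (E (subprod Zs (\<lambda>p. p \<in> V))))))))"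

definition is_J_right ::
  "('b::star_cmplx_alg \<Rightarrow> 'a::star_cmplx_alg) \<Rightarrow> ('a \<Rightarrow> 'b) \<Rightarrow> ('a \<Rightarrow> complex) \<Rightarrow>
   'a \<Rightarrow> 'a set \<Rightarrow> 'a set \<Rightarrow> ('b \<Rightarrow> 'b) \<Rightarrow> (nat \<Rightarrow> 'a) \<Rightarrow> bool" where
  "is_J_right R E \<tau> Y Cl Cr \<eta> y \<longleftrightarrow>
     l2_cauchy \<tau> y \<and> (\<forall>k. y k \<in> gen_alg (insert Y (Cl \<union> Cr))) \<and>
     (\<forall>Zs. set Zs \<subseteq> insert Y (Cl \<union> Cr) \<longrightarrow>
        tau_L2 \<tau> (prod_list Zs) y =
          (\<Sum>k\<in>{k. k < length Zs \<and> Zs ! k = Y}.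
             (let V = {m. k < m \<and> m < length Zs \<and> Zs ! m \<in> insert Y Cr} in
              \<tau> (subprod Zs (\<lambda>p. p \<notin> V \<and> p \<noteq> k) * R (\<eta> (E (subprod Zs (\<lambda>p. p \<in> V))))))))"

end

theory Submission
  imports Defs
begin

(* Append the letters R b1 and L b2 to a word Z1 ... Zn. Since L b2 lies in C_l it joins every
   block V_k, and E(Q L b2) = E(Q) b2 for Q in A_l; since R b1 lies in C_r it stays outside,
   and tau(a R b) = tau(a L b) moves it into the B-valued factor as L(... b1). So the moment
   identities of xi on the longer words are exactly those of R b1 L b2 xi for the twisted map
   b |-> eta(b b2) b1. The moment identities count every letter equal to X as an occurrence of X,
   so the appended letters are first rescaled (or, if R b1 lies in C_l as well, split) so that
   they differ from X and fall into the intended algebra. *)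

context star_cmplx_alg
begin

lemma cscale_zero_right [simp]: "cscale c 0 = 0"
  using cscale_add_right[of c 0 0] by simp

lemma cscale_zero_left [simp]: "cscale 0 x = 0"
  using cscale_add_left[of 0 0 x] by simp

lemma cscale_minus_left: "cscale (- c) x = - cscale c x"
  using cscale_add_left[of c "- c" x] by (simp add: eq_neg_iff_add_eq_0 add.commute)

lemma cscale_diff_left: "cscale (c - d) x = cscale c x - cscale d x"
  using cscale_add_left[of c "- d" x] by (simp add: cscale_minus_left)

lemma cscale_minus_right: "cscale c (- x) = - cscale c x"
  using cscale_add_right[of c x "- x"] by (simp add: eq_neg_iff_add_eq_0 add.commute)

lemma cscale_diff_right: "cscale c (x - y) = cscale c x - cscale c y"
  using cscale_add_right[of c x "- y"] by (simp add: cscale_minus_right)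

lemma cscale_cancel_right: "cscale s x = cscale t x \<longleftrightarrow> s = t \<or> x = 0"
proof (intro iffI)
  assume eq: "cscale s x = cscale t x"
  have "cscale (1 / (s - t)) (cscale (s - t) x) = 0"
    using eq by (simp add: cscale_diff_left)
  then show "s = t \<or> x = 0" by (cases "s = t") (simp_all add: cscale_cscale cscale_one)
qed auto

lemma inj_cscale_left: "x \<noteq> 0 \<Longrightarrow> inj (\<lambda>s. cscale s x)"
  by (simp add: inj_def cscale_cancel_right)

lemma cscale_mult_cscale_inverse: "s \<noteq> 0 \<Longrightarrow> cscale s x * cscale (1 / s) y = x * y"
  by (simp add: cscale_mult_left cscale_mult_right cscale_cscale cscale_one)

lemma adj_zero [simp]: "adj 0 = 0"
  using adj_add[of 0 0] by simp

lemma adj_one [simp]: "adj 1 = 1"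
  using adj_mult[of "adj 1" 1] by (simp add: adj_adj)

lemma adj_minus: "adj (- x) = - adj x"
  using adj_add[of x "- x"] by (simp add: eq_neg_iff_add_eq_0 add.commute)

lemma adj_diff: "adj (x - y) = adj x - adj y"
  using adj_add[of x "- y"] by (simp add: adj_minus)

end

lemma clinear_zero: "clinear f \<Longrightarrow> f 0 = 0"
  unfolding clinear_def by (metis add_cancel_right_right)

lemma clinear_cscale: "clinear f \<Longrightarrow> f (cscale c x) = cscale c (f x)"
  unfolding clinear_def by blast

lemma clinear_functional_add: "clinear_functional f \<Longrightarrow> f (x + y) = f x + f y"
  unfolding clinear_functional_def by blast

lemma clinear_functional_cscale: "clinear_functional f \<Longrightarrow> f (cscale c x) = c * f x"
  unfolding clinear_functional_def by blast

lemma clinear_functional_zero: "clinear_functional f \<Longrightarrow> f 0 = 0"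
  using clinear_functional_add[of f 0 0] by simp

lemma clinear_functional_diff: "clinear_functional f \<Longrightarrow> f (x - y) = f x - f y"
  using clinear_functional_add[of f "x - y" y] by simp

lemma unital_subalg_one: "unital_subalg S \<Longrightarrow> 1 \<in> S"
  unfolding unital_subalg_def by blast

lemma unital_subalg_cscale: "unital_subalg S \<Longrightarrow> x \<in> S \<Longrightarrow> cscale c x \<in> S"
  unfolding unital_subalg_def by blast

lemma unital_subalg_add: "unital_subalg S \<Longrightarrow> x \<in> S \<Longrightarrow> y \<in> S \<Longrightarrow> x + y \<in> S"
  unfolding unital_subalg_def by blast

lemma unital_subalg_zero: "unital_subalg S \<Longrightarrow> (0::'a::star_cmplx_alg) \<in> S"
  using unital_subalg_cscale[of S 1 0] unital_subalg_one[of S] by simp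

lemma unital_subalg_diff: "unital_subalg S \<Longrightarrow> x \<in> S \<Longrightarrow> y \<in> S \<Longrightarrow> x - y \<in> S"
  using unital_subalg_add[of S x "cscale (- 1) y"] unital_subalg_cscale[of S y "- 1"]
  by (simp add: cscale_minus_left cscale_one)

lemma unital_subalg_cscale_iff:
  "unital_subalg S \<Longrightarrow> c \<noteq> 0 \<Longrightarrow> cscale c x \<in> S \<longleftrightarrow> x \<in> S"
  using unital_subalg_cscale[of S "cscale c x" "1 / c"] unital_subalg_cscale[of S x c]
  by (auto simp: cscale_cscale cscale_one)

lemma exists_nonzero_avoiding:
  fixes f g :: "complex \<Rightarrow> 'a"
  assumes "inj f" "inj g"
  shows "\<exists>s. s \<noteq> 0 \<and> f s \<noteq> X \<and> g s \<noteq> X"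
proof (rule ccontr)
  assume "\<not> ?thesis"
  then have hit: "f s = X \<or> g s = X" if "s \<noteq> 0" for s
    using that by blast
  have f: "a = b" if "f a = X" "f b = X" for a b
    using that injD[OF assms(1)] by metis
  have g: "a = b" if "g a = X" "g b = X" for a b
    using that injD[OF assms(2)] by metis
  from hit[of 1] hit[of 2] hit[of 3] f[of 1 2] f[of 1 3] f[of 2 3] g[of 1 2] g[of 1 3] g[of 2 3]
  show False by auto
qed

section \<open>States and the \<open>L\<^sub>2\<close> seminorm\<close>

lemma cstate_adj:
  assumes "cstate \<tau>"
  shows "\<tau> (adj y) = cnj (\<tau> y)"
proof -
  have lin: "clinear_functional \<tau>" and one: "\<tau> 1 = 1" and real: "\<And>a. Im (\<tau> (adj a * a)) = 0"
    using assms unfolding cstate_def by auto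
  have "adj (1 + y) * (1 + y) = 1 + y + adj y + adj y * y"
    by (simp add: adj_add algebra_simps)
  then have im: "Im (\<tau> y) + Im (\<tau> (adj y)) = 0"
    using real[of "1 + y"] real[of y] by (simp add: clinear_functional_add[OF lin] one)
  have "adj (1 + cscale \<i> y) * (1 + cscale \<i> y)
      = 1 + cscale \<i> y + cscale (- \<i>) (adj y) + cscale (- \<i>) (adj y) * cscale \<i> y"
    by (simp add: adj_add adj_cscale algebra_simps)
  also have "cscale (- \<i>) (adj y) * cscale \<i> y = adj y * y"
    by (simp add: cscale_mult_left cscale_mult_right cscale_cscale cscale_one)
  finally have re: "Re (\<tau> y) - Re (\<tau> (adj y)) = 0"
    using real[of "1 + cscale \<i> y"] real[of y]
    by (simp add: clinear_functional_add[OF lin] clinear_functional_cscale[OF lin] one)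
  show ?thesis using im re by (simp add: complex_eq_iff)
qed

lemma cstate_norm_square_le:
  assumes "cstate \<tau>"
  shows "(cmod (\<tau> y))\<^sup>2 \<le> Re (\<tau> (adj y * y))"
proof -
  have lin: "clinear_functional \<tau>" and one: "\<tau> 1 = 1" and pos: "\<And>a. 0 \<le> Re (\<tau> (adj a * a))"
    using assms unfolding cstate_def by auto
  define t where "t = \<tau> y"
  define z where "z = y - cscale t 1"
  have "adj z * z = adj y * y - cscale t (adj y) - cscale (cnj t) y + cscale (cnj t * t) 1"
    unfolding z_def
    by (simp add: adj_diff adj_cscale algebra_simps cscale_mult_left cscale_mult_right cscale_cscale
        cscale_diff_right cscale_one)
  then have "\<tau> (adj z * z) = \<tau> (adj y * y) - t * cnj t"
    by (simp add: clinear_functional_add[OF lin] clinear_functional_diff[OF lin]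
        clinear_functional_cscale[OF lin] one cstate_adj[OF assms] t_def)
  then have "Re (\<tau> (adj z * z)) = Re (\<tau> (adj y * y)) - (cmod t)\<^sup>2"
    by (simp add: complex_mult_cnj cmod_power2)
  with pos[of z] show ?thesis unfolding t_def by simp
qed

definition left_mult_bounded :: "('a::star_cmplx_alg \<Rightarrow> complex) \<Rightarrow> bool" where
  "left_mult_bounded \<tau> \<longleftrightarrow> (\<forall>a. \<exists>C. \<forall>x. Re (\<tau> (adj (a * x) * (a * x))) \<le> C * Re (\<tau> (adj x * x)))"

lemma l2_cauchy_left_mult:
  assumes st: "cstate \<tau>" and bnd: "left_mult_bounded \<tau>" and cau: "l2_cauchy \<tau> x"
  shows "l2_cauchy \<tau> (\<lambda>k. a * x k)"
  unfolding l2_cauchy_def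
proof (intro allI impI)
  fix e :: real
  assume "e > 0"
  have pos: "\<And>y. 0 \<le> Re (\<tau> (adj y * y))" using st unfolding cstate_def by auto
  obtain C where C: "\<And>y. Re (\<tau> (adj (a * y) * (a * y))) \<le> C * Re (\<tau> (adj y * y))"
    using bnd unfolding left_mult_bounded_def by blast
  define D where "D = max C 1"
  have "D > 0" "D \<ge> C" unfolding D_def by auto
  obtain N where N: "\<And>m k. m \<ge> N \<Longrightarrow> k \<ge> N \<Longrightarrow> Re (\<tau> (adj (x m - x k) * (x m - x k))) < e / D"
    using cau \<open>e > 0\<close> \<open>D > 0\<close> unfolding l2_cauchy_def by (meson divide_pos_pos)
  show "\<exists>N. \<forall>m\<ge>N. \<forall>k\<ge>N. Re (\<tau> (adj (a * x m - a * x k) * (a * x m - a * x k))) < e"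
  proof (intro exI allI impI)
    fix m k
    assume mk: "m \<ge> N" "k \<ge> N"
    have "Re (\<tau> (adj (a * x m - a * x k) * (a * x m - a * x k)))
        \<le> C * Re (\<tau> (adj (x m - x k) * (x m - x k)))"
      using C[of "x m - x k"] by (simp add: right_diff_distrib)
    also have "\<dots> \<le> D * Re (\<tau> (adj (x m - x k) * (x m - x k)))"
      using \<open>D \<ge> C\<close> pos by (simp add: mult_right_mono)
    also have "\<dots> < D * (e / D)"
      using N[OF mk] \<open>D > 0\<close> by (simp only: mult_strict_left_mono)
    also have "\<dots> = e" using \<open>D > 0\<close> by simp
    finally show "Re (\<tau> (adj (a * x m - a * x k) * (a * x m - a * x k))) < e" .
  qed
qed

lemma convergent_tau_mult:
  assumes st: "cstate \<tau>" and bnd: "left_mult_bounded \<tau>" and cau: "l2_cauchy \<tau> x"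
  shows "convergent (\<lambda>k. \<tau> (a * x k))"
proof -
  have lin: "clinear_functional \<tau>" using st unfolding cstate_def by auto
  have "Cauchy (\<lambda>k. \<tau> (a * x k))"
  proof (rule metric_CauchyI)
    fix e :: real
    assume "e > 0"
    obtain N where N: "\<And>m k. m \<ge> N \<Longrightarrow> k \<ge> N \<Longrightarrow>
        Re (\<tau> (adj (a * x m - a * x k) * (a * x m - a * x k))) < e\<^sup>2"
      using l2_cauchy_left_mult[OF st bnd cau] \<open>e > 0\<close> unfolding l2_cauchy_def
      by (meson zero_less_power)
    show "\<exists>M. \<forall>m\<ge>M. \<forall>n\<ge>M. dist (\<tau> (a * x m)) (\<tau> (a * x n)) < e"
    proof (intro exI allI impI)
      fix m n
      assume mn: "m \<ge> N" "n \<ge> N"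
      have "(dist (\<tau> (a * x m)) (\<tau> (a * x n)))\<^sup>2 = (cmod (\<tau> (a * x m - a * x n)))\<^sup>2"
        by (simp add: dist_norm clinear_functional_diff[OF lin])
      also have "\<dots> < e\<^sup>2"
        using cstate_norm_square_le[OF st] N[OF mn] by (rule le_less_trans)
      finally show "dist (\<tau> (a * x m)) (\<tau> (a * x n)) < e"
        using \<open>e > 0\<close> by (meson power_less_imp_less_base less_imp_le)
    qed
  qed
  then show ?thesis by (simp add: Cauchy_convergent_iff)
qed

lemma tau_L2_zero:
  "clinear_functional \<tau> \<Longrightarrow> tau_L2 \<tau> 0 x = 0"
  unfolding tau_L2_def by (simp add: clinear_functional_zero limI)

lemma tau_L2_mult_seq: "tau_L2 \<tau> a (\<lambda>k. b * x k) = tau_L2 \<tau> (a * b) x"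
  unfolding tau_L2_def by (simp add: mult.assoc)

lemma tau_L2_diff:
  assumes st: "cstate \<tau>" and bnd: "left_mult_bounded \<tau>" and cau: "l2_cauchy \<tau> x"
  shows "tau_L2 \<tau> (a - b) x = tau_L2 \<tau> a x - tau_L2 \<tau> b x"
proof -
  have lin: "clinear_functional \<tau>" using st unfolding cstate_def by auto
  have "(\<lambda>k. \<tau> ((a - b) * x k)) = (\<lambda>k. \<tau> (a * x k) - \<tau> (b * x k))"
    by (simp add: left_diff_distrib clinear_functional_diff[OF lin])
  then show ?thesis
    unfolding tau_L2_def using convergent_tau_mult[OF st bnd cau]
    by (simp add: limI tendsto_diff convergent_LIMSEQ_iff)
qed

section \<open>Moment sums over words\<close>

definition positions :: "'a \<Rightarrow> 'a list \<Rightarrow> nat set" where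
  "positions X Zs = {k. k < length Zs \<and> Zs ! k = X}"

text \<open>\<open>later_in VS Zs k\<close> is the set \<open>V\<^sub>k\<close> of the definition of \<open>J\<close>, with \<open>VS = {X} \<union> C\<^sub>\<ell>\<close>
  for \<open>J\<^sub>\<ell>\<close> and \<open>VS = {Y} \<union> C\<^sub>r\<close> for \<open>J\<^sub>r\<close>.\<close>
definition later_in :: "'a set \<Rightarrow> 'a list \<Rightarrow> nat \<Rightarrow> nat set" where
  "later_in VS Zs k = {m. k < m \<and> m < length Zs \<and> Zs ! m \<in> VS}"

definition moment_sum ::
  "'a::monoid_mult \<Rightarrow> 'a set \<Rightarrow> 'a list \<Rightarrow> ('a \<Rightarrow> 'a \<Rightarrow> 'c::comm_monoid_add) \<Rightarrow> 'c" where
  "moment_sum X VS Zs f = (\<Sum>k\<in>positions X Zs.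
     f (subprod Zs (\<lambda>p. p \<notin> later_in VS Zs k \<and> p \<noteq> k)) (subprod Zs (\<lambda>p. p \<in> later_in VS Zs k)))"

lemma is_J_left_iff:
  "is_J_left L E \<tau> X Cl Cr \<eta> x \<longleftrightarrow>
     l2_cauchy \<tau> x \<and> (\<forall>k. x k \<in> gen_alg (insert X (Cl \<union> Cr))) \<and>
     (\<forall>Zs. set Zs \<subseteq> insert X (Cl \<union> Cr) \<longrightarrow>
        tau_L2 \<tau> (prod_list Zs) x = moment_sum X (insert X Cl) Zs (\<lambda>P Q. \<tau> (P * L (\<eta> (E Q)))))"
  unfolding is_J_left_def moment_sum_def later_in_def positions_def Let_def by simp

lemma is_J_right_iff:
  "is_J_right R E \<tau> Y Cl Cr \<eta> x \<longleftrightarrow>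
     l2_cauchy \<tau> x \<and> (\<forall>k. x k \<in> gen_alg (insert Y (Cr \<union> Cl))) \<and>
     (\<forall>Zs. set Zs \<subseteq> insert Y (Cr \<union> Cl) \<longrightarrow>
        tau_L2 \<tau> (prod_list Zs) x = moment_sum Y (insert Y Cr) Zs (\<lambda>P Q. \<tau> (P * R (\<eta> (E Q)))))"
  unfolding is_J_right_def moment_sum_def later_in_def positions_def Let_def by (simp add: Un_commute)

lemma subprod_append:
  "subprod (xs @ ys) P = subprod xs P * subprod ys (\<lambda>p. P (length xs + p))"
proof -
  have "[0..<length (xs @ ys)] = [0..<length xs] @ [length xs..<length xs + length ys]"
    using upt_add_eq_append[of 0 "length xs" "length ys"] by simp
  also have "[length xs..<length xs + length ys] = map (\<lambda>p. length xs + p) [0..<length ys]"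
    using map_add_upt[of "length xs" "length ys"] by (simp add: add.commute)
  finally have split: "[0..<length (xs @ ys)] = [0..<length xs] @ map (\<lambda>p. length xs + p) [0..<length ys]" .
  have prefix: "map ((!) (xs @ ys)) (filter P [0..<length xs]) = map ((!) xs) (filter P [0..<length xs])"
    by (auto simp: nth_append)
  show ?thesis
    unfolding subprod_def split filter_append map_append prod_list.append prefix
    by (simp add: filter_map o_def)
qed

lemma subprod_cong:
  "(\<And>p. p < length xs \<Longrightarrow> P p = Q p) \<Longrightarrow> subprod xs P = subprod xs Q"
  unfolding subprod_def by (metis (mono_tags, lifting) atLeastLessThan_iff filter_cong set_upt)

lemma subprod_nth: "subprod xs (\<lambda>p. Q (xs ! p)) = prod_list (filter Q xs)"
proof -
  have "filter Q xs = filter Q (map (\<lambda>p. xs ! p) [0..<length xs])"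
    by (simp add: map_nth)
  also have "\<dots> = map (\<lambda>p. xs ! p) (filter (\<lambda>p. Q (xs ! p)) [0..<length xs])"
    by (simp add: filter_map o_def)
  finally show ?thesis unfolding subprod_def by simp
qed

lemma subprod_True: "subprod xs (\<lambda>_. True) = prod_list xs"
  using subprod_nth[of xs "\<lambda>_. True"] by simp

definition mult_submonoid :: "'a::monoid_mult set \<Rightarrow> bool" where
  "mult_submonoid A \<longleftrightarrow> 1 \<in> A \<and> (\<forall>a\<in>A. \<forall>b\<in>A. a * b \<in> A)"

lemma prod_list_mem:
  "mult_submonoid A \<Longrightarrow> set xs \<subseteq> A \<Longrightarrow> prod_list xs \<in> A"
  by (induction xs) (auto simp: mult_submonoid_def)

lemma subprod_mem:
  assumes "mult_submonoid A" "\<And>p. p < length xs \<Longrightarrow> P p \<Longrightarrow> xs ! p \<in> A"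
  shows "subprod xs P \<in> A"
  unfolding subprod_def using assms by (intro prod_list_mem) auto

lemma subprod_False: "subprod xs (\<lambda>_. False) = 1"
  unfolding subprod_def by simp

lemma positions_append_left:
  assumes "X \<notin> set F"
  shows "positions X (F @ Zs) = (\<lambda>k. length F + k) ` positions X Zs"
proof (intro set_eqI iffI)
  fix k
  assume k: "k \<in> positions X (F @ Zs)"
  have "\<not> k < length F"
    using k assms by (auto simp: positions_def nth_append dest: nth_mem)
  with k show "k \<in> (\<lambda>k. length F + k) ` positions X Zs"
    by (auto simp: positions_def nth_append image_iff intro!: exI[of _ "k - length F"])
qed (auto simp: positions_def nth_append)

lemma positions_append_right:
  assumes "X \<notin> set T"
  shows "positions X (Zs @ T) = positions X Zs"
proof (intro set_eqI iffI)
  fix k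
  assume k: "k \<in> positions X (Zs @ T)"
  have "k < length Zs"
  proof (rule ccontr)
    assume "\<not> k < length Zs"
    then have "T ! (k - length Zs) = X" "k - length Zs < length T"
      using k by (auto simp: positions_def nth_append)
    then show False using assms by (metis nth_mem)
  qed
  with k show "k \<in> positions X Zs" by (simp add: positions_def nth_append)
qed (simp add: positions_def nth_append)

lemma moment_sum_append_left:
  assumes "X \<notin> set F"
  shows "moment_sum X VS (F @ Zs) f = moment_sum X VS Zs (\<lambda>P Q. f (prod_list F * P) Q)"
proof -
  let ?n = "length F"
  have outer: "subprod (F @ Zs) (\<lambda>p. p \<notin> later_in VS (F @ Zs) (?n + k) \<and> p \<noteq> ?n + k)
      = prod_list F * subprod Zs (\<lambda>p. p \<notin> later_in VS Zs k \<and> p \<noteq> k)" for k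
    unfolding subprod_append subprod_True[symmetric]
    by (intro arg_cong2[where f = times] subprod_cong) (auto simp: later_in_def)
  have inner: "subprod (F @ Zs) (\<lambda>p. p \<in> later_in VS (F @ Zs) (?n + k))
      = subprod Zs (\<lambda>p. p \<in> later_in VS Zs k)" for k
  proof -
    have "subprod F (\<lambda>p. p \<in> later_in VS (F @ Zs) (?n + k)) = 1"
      unfolding subprod_False[symmetric, of F] by (rule subprod_cong) (auto simp: later_in_def)
    moreover have "subprod Zs (\<lambda>p. ?n + p \<in> later_in VS (F @ Zs) (?n + k))
        = subprod Zs (\<lambda>p. p \<in> later_in VS Zs k)"
      by (rule subprod_cong) (auto simp: later_in_def)
    ultimately show ?thesis by (simp add: subprod_append)
  qed
  show ?thesis
    unfolding moment_sum_def positions_append_left[OF assms]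
    by (simp add: sum.reindex inj_on_def outer inner)
qed

lemma moment_sum_append_right:
  assumes "X \<notin> set T"
  shows "moment_sum X VS (Zs @ T) f = moment_sum X VS Zs
    (\<lambda>P Q. f (P * prod_list (filter (\<lambda>a. a \<notin> VS) T)) (Q * prod_list (filter (\<lambda>a. a \<in> VS) T)))"
proof -
  let ?n = "length Zs"
  have later_T: "(?n + p \<in> later_in VS (Zs @ T) k) = (T ! p \<in> VS)" if "k < ?n" "p < length T" for k p
    using that by (auto simp: later_in_def nth_append)
  have later_Zs: "(p \<in> later_in VS (Zs @ T) k) = (p \<in> later_in VS Zs k)" if "p < ?n" for k p
    using that by (auto simp: later_in_def nth_append)
  have outer: "subprod (Zs @ T) (\<lambda>p. p \<notin> later_in VS (Zs @ T) k \<and> p \<noteq> k)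
      = subprod Zs (\<lambda>p. p \<notin> later_in VS Zs k \<and> p \<noteq> k) * prod_list (filter (\<lambda>a. a \<notin> VS) T)"
    if "k < ?n" for k
    unfolding subprod_append subprod_nth[symmetric] using that later_T later_Zs
    by (intro arg_cong2[where f = times] subprod_cong) auto
  have inner: "subprod (Zs @ T) (\<lambda>p. p \<in> later_in VS (Zs @ T) k)
      = subprod Zs (\<lambda>p. p \<in> later_in VS Zs k) * prod_list (filter (\<lambda>a. a \<in> VS) T)"
    if "k < ?n" for k
    unfolding subprod_append subprod_nth[symmetric] using that later_T later_Zs
    by (intro arg_cong2[where f = times] subprod_cong) auto
  show ?thesis
    unfolding moment_sum_def positions_append_right[OF assms]
    by (intro sum.cong) (auto simp: positions_def outer inner)
qed

lemma moment_sum_frame: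
  assumes "X \<notin> set F" "X \<notin> set T1" "X \<notin> set T2" "set T1 \<inter> VS = {}" "set T2 \<subseteq> VS"
  shows "moment_sum X VS (F @ Zs @ T1 @ T2) f
    = moment_sum X VS Zs (\<lambda>P Q. f (prod_list F * P * prod_list T1) (Q * prod_list T2))"
proof -
  have "\<forall>a\<in>set T1. a \<notin> VS" "\<forall>a\<in>set T2. a \<in> VS"
    using assms(4,5) by auto
  then have filters: "filter (\<lambda>a. a \<notin> VS) (T1 @ T2) = T1" "filter (\<lambda>a. a \<in> VS) (T1 @ T2) = T2"
    by simp_all
  have "moment_sum X VS (F @ Zs @ T1 @ T2) f
      = moment_sum X VS (Zs @ T1 @ T2) (\<lambda>P Q. f (prod_list F * P) Q)"
    by (rule moment_sum_append_left[OF assms(1)])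
  also have "\<dots> = moment_sum X VS Zs (\<lambda>P Q. f (prod_list F * (P * prod_list T1)) (Q * prod_list T2))"
    by (subst moment_sum_append_right) (use assms(2,3) filters in simp_all)
  finally show ?thesis by (simp add: mult.assoc)
qed

lemma moment_sum_cong:
  assumes "mult_submonoid A" "mult_submonoid B" "set Zs \<subseteq> A" "VS \<subseteq> B"
    and "\<And>P Q. P \<in> A \<Longrightarrow> Q \<in> B \<Longrightarrow> f P Q = g P Q"
  shows "moment_sum X VS Zs f = moment_sum X VS Zs g"
  unfolding moment_sum_def
proof (rule sum.cong[OF refl], rule assms(5))
  fix k
  show "subprod Zs (\<lambda>p. p \<notin> later_in VS Zs k \<and> p \<noteq> k) \<in> A"
    using assms(3) by (intro subprod_mem[OF assms(1)]) auto
  show "subprod Zs (\<lambda>p. p \<in> later_in VS Zs k) \<in> B"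
    using assms(4) by (intro subprod_mem[OF assms(2)]) (auto simp: later_in_def)
qed

lemma moment_sum_diff:
  fixes f g :: "'a::monoid_mult \<Rightarrow> 'a \<Rightarrow> 'c::ab_group_add"
  shows "moment_sum X VS Zs f - moment_sum X VS Zs g = moment_sum X VS Zs (\<lambda>P Q. f P Q - g P Q)"
  unfolding moment_sum_def by (simp add: sum_subtractf)

section \<open>Conjugate variables times two letters\<close>

text \<open>The sequence \<open>x\<close> represents \<open>J\<^sub>\<ell>(X : (Cs, Os), \<eta>)\<close> when \<open>M = L\<close>, and
  \<open>J\<^sub>r(X : (Os, Cs), \<eta>)\<close> when \<open>M = R\<close>: \<open>Cs\<close> is the algebra on the side of \<open>X\<close>.\<close>
locale conjugate_variable =
  fixes \<tau> :: "'a::star_cmplx_alg \<Rightarrow> complex" and E :: "'a \<Rightarrow> 'b::star_cmplx_alg"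
    and M :: "'b \<Rightarrow> 'a" and \<eta> :: "'b \<Rightarrow> 'b" and X :: 'a and Cs Os :: "'a set"
    and x :: "nat \<Rightarrow> 'a"
  assumes state: "cstate \<tau>" and bounded: "left_mult_bounded \<tau>"
    and clinear_E: "clinear E" and clinear_eta: "clinear \<eta>" and clinear_M: "clinear M"
    and subalg_Cs: "unital_subalg Cs" and subalg_Os: "unital_subalg Os"
    and cauchy: "l2_cauchy \<tau> x"
    and moments: "\<And>Zs. set Zs \<subseteq> insert X (Cs \<union> Os) \<Longrightarrow>
      tau_L2 \<tau> (prod_list Zs) x = moment_sum X (insert X Cs) Zs (\<lambda>P Q. \<tau> (P * M (\<eta> (E Q))))"
begin

lemma clinear_functional_tau: "clinear_functional \<tau>"
  using state unfolding cstate_def by blast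

lemma one_neq_zero: "(1::'a) \<noteq> 0"
  using state clinear_functional_zero[OF clinear_functional_tau] unfolding cstate_def by auto

lemma M_eta_E_cscale: "M (\<eta> (E (Q * cscale c v))) = cscale c (M (\<eta> (E (Q * v))))"
  by (simp add: cscale_mult_right clinear_cscale[OF clinear_E] clinear_cscale[OF clinear_eta]
      clinear_cscale[OF clinear_M])

lemma prod_list_avoiding:
  assumes "v \<in> Cs" "v \<noteq> 0"
  obtains T where "set T \<subseteq> Cs" "X \<notin> set T" "prod_list T = v"
proof -
  have "inj (\<lambda>s. cscale s v)"
    using assms(2) by (rule inj_cscale_left)
  moreover have "inj (\<lambda>s. cscale (1 / s) (1::'a))"
  proof (rule injI)
    fix s t :: complex
    assume "cscale (1 / s) 1 = cscale (1 / t) (1::'a)"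
    then have "1 / s = 1 / t" using one_neq_zero cscale_cancel_right by blast
    then show "s = t" by (metis inverse_eq_divide inverse_inverse_eq)
  qed
  ultimately obtain s where s: "s \<noteq> 0" "cscale s v \<noteq> X" "cscale (1 / s) 1 \<noteq> X"
    using exists_nonzero_avoiding[of "\<lambda>s. cscale s v" "\<lambda>s. cscale (1 / s) 1" X] by auto
  show ?thesis
  proof
    show "set [cscale s v, cscale (1 / s) 1] \<subseteq> Cs"
      using assms(1) unital_subalg_cscale[OF subalg_Cs] unital_subalg_one[OF subalg_Cs] by auto
    show "X \<notin> set [cscale s v, cscale (1 / s) 1]"
      using s by auto
    show "prod_list [cscale s v, cscale (1 / s) 1] = v"
      using cscale_mult_cscale_inverse[OF s(1), of v 1] by simp
  qed
qed

lemma moments_frame: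
  assumes Zs: "set Zs \<subseteq> insert X (Cs \<union> Os)"
    and F: "set F \<subseteq> insert X (Cs \<union> Os)" "X \<notin> set F"
    and T: "set T \<subseteq> Os" "set T \<inter> insert X Cs = {}"
    and v: "v \<in> Cs"
  shows "tau_L2 \<tau> (prod_list F * prod_list Zs * prod_list T * v) x
    = moment_sum X (insert X Cs) Zs (\<lambda>P Q. \<tau> (prod_list F * P * prod_list T * M (\<eta> (E (Q * v)))))"
proof (cases "v = 0")
  case True
  then show ?thesis
    by (simp add: moment_sum_def tau_L2_zero clinear_functional_tau clinear_functional_zero
        clinear_zero[OF clinear_E] clinear_zero[OF clinear_eta] clinear_zero[OF clinear_M])
next
  case False
  then obtain T2 where T2: "set T2 \<subseteq> Cs" "X \<notin> set T2" "prod_list T2 = v"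
    using prod_list_avoiding v by blast
  have "tau_L2 \<tau> (prod_list F * prod_list Zs * prod_list T * v) x
      = tau_L2 \<tau> (prod_list (F @ Zs @ T @ T2)) x"
    using T2(3) by (simp add: mult.assoc)
  also have "\<dots> = moment_sum X (insert X Cs) (F @ Zs @ T @ T2) (\<lambda>P Q. \<tau> (P * M (\<eta> (E Q))))"
    using Zs F T T2 by (intro moments) auto
  also have "\<dots> = moment_sum X (insert X Cs) Zs
      (\<lambda>P Q. \<tau> (prod_list F * P * prod_list T * M (\<eta> (E (Q * prod_list T2)))))"
    using F T T2 by (intro moment_sum_frame) auto
  finally show ?thesis using T2(3) by simp
qed

lemma moments_mult_outside:
  assumes Zs: "set Zs \<subseteq> insert X (Cs \<union> Os)" and u: "u \<in> Os" "u \<notin> Cs" and v: "v \<in> Cs"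
  shows "tau_L2 \<tau> (prod_list Zs * u * v) x
    = moment_sum X (insert X Cs) Zs (\<lambda>P Q. \<tau> (P * u * M (\<eta> (E (Q * v)))))"
proof -
  have "u \<noteq> 0" using u(2) unital_subalg_zero[OF subalg_Cs] by auto
  then obtain s where s: "s \<noteq> 0" "cscale s u \<noteq> X"
    using exists_nonzero_avoiding[of "\<lambda>s. cscale s u" "\<lambda>s. cscale s u" X] inj_cscale_left by auto
  have su: "cscale s u \<in> Os" "cscale s u \<notin> Cs"
    using u unital_subalg_cscale_iff[OF subalg_Os s(1)] unital_subalg_cscale_iff[OF subalg_Cs s(1)]
    by auto
  have "tau_L2 \<tau> (prod_list Zs * u * v) x
      = tau_L2 \<tau> (prod_list [] * prod_list Zs * prod_list [cscale s u] * cscale (1 / s) v) x"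
    using cscale_mult_cscale_inverse[OF s(1), of u v] by (simp add: mult.assoc)
  also have "\<dots> = moment_sum X (insert X Cs) Zs
      (\<lambda>P Q. \<tau> (prod_list [] * P * prod_list [cscale s u] * M (\<eta> (E (Q * cscale (1 / s) v)))))"
    using Zs s su unital_subalg_cscale[OF subalg_Cs v] by (intro moments_frame) auto
  also have "\<dots> = moment_sum X (insert X Cs) Zs (\<lambda>P Q. \<tau> (P * u * M (\<eta> (E (Q * v)))))"
    by (simp add: M_eta_E_cscale mult.assoc cscale_mult_cscale_inverse[OF s(1)])
  finally show ?thesis .
qed

lemma moments_mult_split:
  assumes Zs: "set Zs \<subseteq> insert X (Cs \<union> Os)" and u: "u \<in> Os" "u \<in> Cs"
    and c: "c \<in> Os" "c \<notin> Cs" and v: "v \<in> Cs"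
  shows "tau_L2 \<tau> (prod_list Zs * u * v) x
    = moment_sum X (insert X Cs) Zs (\<lambda>P Q. \<tau> (P * u * M (\<eta> (E (Q * v)))))"
proof -
  have uc: "u + c \<in> Os" "u + c \<notin> Cs"
    using u c unital_subalg_add[OF subalg_Os] unital_subalg_diff[OF subalg_Cs, of "u + c" u] by auto
  have "prod_list Zs * u * v = prod_list Zs * (u + c) * v - prod_list Zs * c * v"
    by (simp add: algebra_simps)
  then have "tau_L2 \<tau> (prod_list Zs * u * v) x
      = tau_L2 \<tau> (prod_list Zs * (u + c) * v) x - tau_L2 \<tau> (prod_list Zs * c * v) x"
    using tau_L2_diff[OF state bounded cauchy] by simp
  also have "\<dots> = moment_sum X (insert X Cs) Zs (\<lambda>P Q. \<tau> (P * (u + c) * M (\<eta> (E (Q * v)))))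
      - moment_sum X (insert X Cs) Zs (\<lambda>P Q. \<tau> (P * c * M (\<eta> (E (Q * v)))))"
    using moments_mult_outside[OF Zs uc v] moments_mult_outside[OF Zs c v] by simp
  also have "\<dots> = moment_sum X (insert X Cs) Zs (\<lambda>P Q. \<tau> (P * u * M (\<eta> (E (Q * v)))))"
    unfolding moment_sum_diff
    by (simp add: clinear_functional_diff[OF clinear_functional_tau, symmetric] algebra_simps)
  finally show ?thesis .
qed

lemma moments_mult_commuting:
  assumes Zs: "set Zs \<subseteq> insert X (Cs \<union> Os)"
    and Ac: "mult_submonoid Ac" "insert X (Cs \<union> Os) \<subseteq> Ac"
    and u: "u \<in> Os" "\<forall>a\<in>Ac. u * a = a * u" and v: "v \<in> Cs"
  shows "tau_L2 \<tau> (prod_list Zs * u * v) x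
    = moment_sum X (insert X Cs) Zs (\<lambda>P Q. \<tau> (P * u * M (\<eta> (E (Q * v)))))"
proof (cases "u = 0")
  case True
  then show ?thesis
    by (simp add: moment_sum_def tau_L2_zero clinear_functional_tau clinear_functional_zero)
next
  case False
  then obtain s where s: "s \<noteq> 0" "cscale s u \<noteq> X"
    using exists_nonzero_avoiding[of "\<lambda>s. cscale s u" "\<lambda>s. cscale s u" X] inj_cscale_left by auto
  have su_comm: "cscale s u * a = a * cscale s u" if "a \<in> Ac" for a
    using u(2) that by (simp add: cscale_mult_left cscale_mult_right)
  have "prod_list Zs \<in> Ac"
    using Zs Ac by (intro prod_list_mem) auto
  then have "tau_L2 \<tau> (prod_list Zs * u * v) x
      = tau_L2 \<tau> (prod_list [cscale s u] * prod_list Zs * prod_list [] * cscale (1 / s) v) x"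
    using su_comm cscale_mult_cscale_inverse[OF s(1), of u v] by (simp add: mult.assoc)
  also have "\<dots> = moment_sum X (insert X Cs) Zs
      (\<lambda>P Q. \<tau> (prod_list [cscale s u] * P * prod_list [] * M (\<eta> (E (Q * cscale (1 / s) v)))))"
    using Zs s u(1) unital_subalg_cscale[OF subalg_Os] unital_subalg_cscale[OF subalg_Cs v]
    by (intro moments_frame) auto
  also have "\<dots> = moment_sum X (insert X Cs) Zs (\<lambda>P Q. \<tau> (P * u * M (\<eta> (E (Q * v)))))"
  proof (rule moment_sum_cong[OF Ac(1) Ac(1)])
    fix P Q
    assume "P \<in> Ac"
    then show "\<tau> (prod_list [cscale s u] * P * prod_list [] * M (\<eta> (E (Q * cscale (1 / s) v))))
        = \<tau> (P * u * M (\<eta> (E (Q * v))))"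
      using su_comm by (simp add: M_eta_E_cscale mult.assoc cscale_mult_cscale_inverse[OF s(1)])
  qed (use Zs Ac in auto)
  finally show ?thesis .
qed

lemma moments_mult:
  assumes Zs: "set Zs \<subseteq> insert X (Cs \<union> Os)"
    and Ac: "mult_submonoid Ac" "insert X Cs \<subseteq> Ac"
    and u: "u \<in> Os" "\<forall>a\<in>Ac. u * a = a * u" and v: "v \<in> Cs"
  shows "tau_L2 \<tau> (prod_list Zs) (\<lambda>k. u * v * x k)
    = moment_sum X (insert X Cs) Zs (\<lambda>P Q. \<tau> (P * u * M (\<eta> (E (Q * v)))))"
proof -
  have "tau_L2 \<tau> (prod_list Zs) (\<lambda>k. u * v * x k) = tau_L2 \<tau> (prod_list Zs * u * v) x"
    by (simp add: tau_L2_mult_seq mult.assoc)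
  also have "\<dots> = moment_sum X (insert X Cs) Zs (\<lambda>P Q. \<tau> (P * u * M (\<eta> (E (Q * v)))))"
  proof (cases "u \<in> Cs")
    case False
    then show ?thesis using moments_mult_outside[OF Zs u(1) _ v] by blast
  next
    case True
    show ?thesis
    proof (cases "Os \<subseteq> Cs")
      case True
      then show ?thesis using moments_mult_commuting[OF Zs Ac(1) _ u v] Ac(2) by blast
    next
      case False
      then obtain c where "c \<in> Os" "c \<notin> Cs" by blast
      then show ?thesis using moments_mult_split[OF Zs u(1) \<open>u \<in> Cs\<close> _ _ v] by blast
    qed
  qed
  finally show ?thesis .
qed

end

section \<open>Twisting by \<open>b\<^sub>1\<close> and \<open>b\<^sub>2\<close>\<close>

lemma analytical_cstate: "analytical L R E \<tau> \<Longrightarrow> cstate \<tau>"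
  unfolding analytical_def by blast

lemma analytical_left_mult_bounded: "analytical L R E \<tau> \<Longrightarrow> left_mult_bounded \<tau>"
  unfolding analytical_def left_mult_bounded_def by blast

lemma analytical_bb_ncps: "analytical L R E \<tau> \<Longrightarrow> bb_ncps L R E"
  unfolding analytical_def by blast

lemma analytical_tau_mult_R:
  assumes "analytical L R E \<tau>"
  shows "\<tau> (w * R b) = \<tau> (w * L b)"
proof -
  have "\<tau> (w * R b) = \<tau> (L (E (w * R b)))" "\<tau> (w * L b) = \<tau> (L (E (w * L b)))"
    using assms unfolding analytical_def by auto
  moreover have "E (w * L b) = E (w * R b)"
    using analytical_bb_ncps[OF assms] unfolding bb_ncps_def by blast
  ultimately show ?thesis by simp
qed

lemma mult_submonoid_A_left: "mult_submonoid (A_left R)"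
  unfolding mult_submonoid_def A_left_def by (simp add: mult.assoc) (metis mult.assoc)

lemma mult_submonoid_A_right: "mult_submonoid (A_right L)"
  unfolding mult_submonoid_def A_right_def by (simp add: mult.assoc) (metis mult.assoc)

lemma mult_submonoid_UNIV: "mult_submonoid UNIV"
  unfolding mult_submonoid_def by simp

lemma bb_ncps_E_mult_L:
  assumes "bb_ncps L R E" "Q \<in> A_left R"
  shows "E (Q * L b) = E Q * b"
proof -
  have "E (Q * L b) = E (Q * R b)"
    using assms(1) unfolding bb_ncps_def by blast
  also have "\<dots> = E (L 1 * R b * Q)"
    using assms unfolding A_left_def bb_ncps_def star_hom_def by simp
  also have "\<dots> = 1 * E Q * b"
    using assms(1) unfolding bb_ncps_def by blast
  also have "\<dots> = E Q * b" by simp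
  finally show ?thesis .
qed

lemma bb_ncps_E_mult_R:
  assumes "bb_ncps L R E" "Q \<in> A_right L"
  shows "E (Q * R b) = b * E Q"
proof -
  have "E (Q * R b) = E (Q * L b)"
    using assms(1) unfolding bb_ncps_def by metis
  also have "\<dots> = E (L b * R 1 * Q)"
    using assms unfolding A_right_def bb_ncps_def star_antihom_def by simp
  also have "\<dots> = b * E Q * 1"
    using assms(1) unfolding bb_ncps_def by blast
  also have "\<dots> = b * E Q" by simp
  finally show ?thesis .
qed

lemma analytical_tau_R_L_eta:
  assumes an: "analytical L R E \<tau>" and Q: "Q \<in> A_left R"
  shows "\<tau> (P * R b1 * L (\<eta> (E (Q * L b2)))) = \<tau> (P * L (\<eta> (E Q * b2) * b1))"
proof -
  have bb: "bb_ncps L R E" by (rule analytical_bb_ncps[OF an])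
  define d where "d = \<eta> (E Q * b2)"
  have "\<tau> (P * R b1 * L d) = \<tau> ((P * L d) * R b1)"
    using bb unfolding bb_ncps_def by (simp add: mult.assoc)
  also have "\<dots> = \<tau> ((P * L d) * L b1)" by (rule analytical_tau_mult_R[OF an])
  also have "\<dots> = \<tau> (P * L (d * b1))"
    using bb unfolding bb_ncps_def star_hom_def by (simp add: mult.assoc)
  finally show ?thesis unfolding bb_ncps_E_mult_L[OF bb Q] d_def .
qed

lemma analytical_tau_L_R_eta:
  assumes an: "analytical L R E \<tau>" and Q: "Q \<in> A_right L"
  shows "\<tau> (P * L b2 * R (\<eta> (E (Q * R b1)))) = \<tau> (P * R (b2 * \<eta> (b1 * E Q)))"
proof -
  have bb: "bb_ncps L R E" by (rule analytical_bb_ncps[OF an])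
  define d where "d = \<eta> (b1 * E Q)"
  have "\<tau> (P * L b2 * R d) = \<tau> ((P * R d) * L b2)"
    using bb unfolding bb_ncps_def by (simp add: mult.assoc)
  also have "\<dots> = \<tau> ((P * R d) * R b2)" by (rule analytical_tau_mult_R[OF an, symmetric])
  also have "\<dots> = \<tau> (P * R (b2 * d))"
    using bb unfolding bb_ncps_def star_antihom_def by (simp add: mult.assoc)
  finally show ?thesis unfolding bb_ncps_E_mult_R[OF bb Q] d_def .
qed

lemma is_J_left_mult:
  assumes an: "analytical L R E \<tau>" and pair: "B_pair L R Cl Cr" and eta: "clinear \<eta>"
    and X: "X \<in> A_left R" and J: "is_J_left L E \<tau> X Cl Cr \<eta> \<xi>"
  shows "is_J_left L E \<tau> X Cl Cr (\<lambda>b. \<eta> (b * b2) * b1) (\<lambda>k. R b1 * L b2 * \<xi> k)"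
proof -
  have Cl: "unital_subalg Cl" "range L \<subseteq> Cl" "Cl \<subseteq> A_left R"
    and Cr: "unital_subalg Cr" "range R \<subseteq> Cr"
    using pair unfolding B_pair_def by auto
  have "clinear E" "clinear L"
    using analytical_bb_ncps[OF an] unfolding bb_ncps_def star_hom_def by auto
  then interpret conjugate_variable \<tau> E L \<eta> X Cl Cr \<xi>
    using analytical_cstate[OF an] analytical_left_mult_bounded[OF an] eta Cl(1) Cr(1) J
    by unfold_locales (auto simp: is_J_left_iff)
  have "tau_L2 \<tau> (prod_list Zs) (\<lambda>k. R b1 * L b2 * \<xi> k)
      = moment_sum X (insert X Cl) Zs (\<lambda>P Q. \<tau> (P * L (\<eta> (E Q * b2) * b1)))"
    if Zs: "set Zs \<subseteq> insert X (Cl \<union> Cr)" for Zs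
  proof -
    have "tau_L2 \<tau> (prod_list Zs) (\<lambda>k. R b1 * L b2 * \<xi> k)
        = moment_sum X (insert X Cl) Zs (\<lambda>P Q. \<tau> (P * R b1 * L (\<eta> (E (Q * L b2)))))"
      using X Cl Cr by (intro moments_mult[OF Zs mult_submonoid_A_left]) (auto simp: A_left_def)
    also have "\<dots> = moment_sum X (insert X Cl) Zs (\<lambda>P Q. \<tau> (P * L (\<eta> (E Q * b2) * b1)))"
      using X Cl(3) analytical_tau_R_L_eta[OF an]
      by (intro moment_sum_cong[OF mult_submonoid_UNIV mult_submonoid_A_left]) auto
    finally show ?thesis .
  qed
  moreover have "R b1 * L b2 * \<xi> k \<in> gen_alg (insert X (Cl \<union> Cr))" for k
    using J Cl(2) Cr(2) unfolding is_J_left_def by (blast intro: gen_alg.intros)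
  ultimately show ?thesis
    unfolding is_J_left_iff using l2_cauchy_left_mult[OF state bounded cauchy] by blast
qed

lemma is_J_right_mult:
  assumes an: "analytical L R E \<tau>" and pair: "B_pair L R Cl Cr" and eta: "clinear \<eta>"
    and Y: "Y \<in> A_right L" and J: "is_J_right R E \<tau> Y Cl Cr \<eta> \<nu>"
  shows "is_J_right R E \<tau> Y Cl Cr (\<lambda>b. b2 * \<eta> (b1 * b)) (\<lambda>k. R b1 * L b2 * \<nu> k)"
proof -
  have Cl: "unital_subalg Cl" "range L \<subseteq> Cl"
    and Cr: "unital_subalg Cr" "range R \<subseteq> Cr" "Cr \<subseteq> A_right L"
    using pair unfolding B_pair_def by auto
  have LR: "L b * R c = R c * L b" for b c
    using analytical_bb_ncps[OF an] unfolding bb_ncps_def by blast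
  have "clinear E" "clinear R"
    using analytical_bb_ncps[OF an] unfolding bb_ncps_def star_antihom_def by auto
  then interpret conjugate_variable \<tau> E R \<eta> Y Cr Cl \<nu>
    using analytical_cstate[OF an] analytical_left_mult_bounded[OF an] eta Cl(1) Cr(1) J
    by unfold_locales (auto simp: is_J_right_iff)
  have "tau_L2 \<tau> (prod_list Zs) (\<lambda>k. R b1 * L b2 * \<nu> k)
      = moment_sum Y (insert Y Cr) Zs (\<lambda>P Q. \<tau> (P * R (b2 * \<eta> (b1 * E Q))))"
    if Zs: "set Zs \<subseteq> insert Y (Cr \<union> Cl)" for Zs
  proof -
    have "tau_L2 \<tau> (prod_list Zs) (\<lambda>k. R b1 * L b2 * \<nu> k)
        = tau_L2 \<tau> (prod_list Zs) (\<lambda>k. L b2 * R b1 * \<nu> k)"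
      by (simp add: LR)
    also have "\<dots> = moment_sum Y (insert Y Cr) Zs (\<lambda>P Q. \<tau> (P * L b2 * R (\<eta> (E (Q * R b1)))))"
      using Y Cl Cr by (intro moments_mult[OF Zs mult_submonoid_A_right]) (auto simp: A_right_def)
    also have "\<dots> = moment_sum Y (insert Y Cr) Zs (\<lambda>P Q. \<tau> (P * R (b2 * \<eta> (b1 * E Q))))"
      using Y Cr(3) analytical_tau_L_R_eta[OF an]
      by (intro moment_sum_cong[OF mult_submonoid_UNIV mult_submonoid_A_right]) auto
    finally show ?thesis .
  qed
  moreover have "R b1 * L b2 * \<nu> k \<in> gen_alg (insert Y (Cr \<union> Cl))" for k
    using J Cl(2) Cr(2) unfolding is_J_right_iff by (blast intro: gen_alg.intros)
  ultimately show ?thesis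
    unfolding is_J_right_iff using l2_cauchy_left_mult[OF state bounded cauchy] by blast
qed

theorem proposition5p8:
  fixes L R :: "'b::star_cmplx_alg \<Rightarrow> 'a::star_cmplx_alg"
    and E :: "'a \<Rightarrow> 'b" and \<tau> :: "'a \<Rightarrow> complex"
    and Cl Cr :: "'a set" and \<eta> :: "'b \<Rightarrow> 'b" and b1 b2 :: 'b
  assumes "analytical L R E \<tau>"
    and "B_pair L R Cl Cr"
    and "cp_on UNIV \<eta>"
  shows "(\<forall>X \<xi>. X \<in> A_left R \<longrightarrow> is_J_left L E \<tau> X Cl Cr \<eta> \<xi> \<longrightarrow>
            cp_on UNIV (\<lambda>b. \<eta> (b * b2) * b1) \<longrightarrow>
            is_J_left L E \<tau> X Cl Cr (\<lambda>b. \<eta> (b * b2) * b1) (\<lambda>k. R b1 * L b2 * \<xi> k))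
       \<and> (\<forall>Y \<nu>. Y \<in> A_right L \<longrightarrow> is_J_right R E \<tau> Y Cl Cr \<eta> \<nu> \<longrightarrow>
            cp_on UNIV (\<lambda>b. b2 * \<eta> (b1 * b)) \<longrightarrow>
            is_J_right R E \<tau> Y Cl Cr (\<lambda>b. b2 * \<eta> (b1 * b)) (\<lambda>k. R b1 * L b2 * \<nu> k))"
proof -
  \<comment> \<open>The moment identities only use linearity of \<open>\<eta>\<close>.\<close>
  have "clinear \<eta>" using assms(3) unfolding cp_on_def by blast
  then show ?thesis
    using is_J_left_mult[OF assms(1,2)] is_J_right_mult[OF assms(1,2)] by blast
qed

end
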